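(* For a set $\mathcal{R}$ of languages over $\Sigma$ and a regular language $R\subseteq\Sigma^*$ let $\mathcal{R}\,\dot-\,R=\{L\setminus R\mid L\in\mathcal{R}\}$. (1) There exist a rational set of regular languages $\mathcal{R}$ and a regular $R$ such that $\mathcal{R}\,\dot-\,R$ is not a rational set of regular languages. (2) If $\mathcal{R}$ is a finite rational set of regular languages and $R$ is regular, then $\mathcal{R}\,\dot-\,R$ is a finite rational set of regular languages. (3) In the latter case a different language substitution is in general required: there exist an alphabet $\Delta$, a regular language substitution $\varphi:\Delta\to2^{\Sigma^*}$, a regular $K\subseteq\Delta^+$ with $\mathcal{R}=(K,\varphi)$ finite, and a regular $R\subseteq\Sigma^*$ such that there is no regular $K'\subseteq\Delta^+$ with $\mathcal{R}\,\dot-\,R=(K',\varphi)$.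
   Context: Alphabets are nonempty finite sets. A regular language substitution $\varphi:\Delta\to2^{\Sigma^*}$ maps each symbol to a regular language over $\Sigma$, extended by $\varphi(\delta w)=\varphi(\delta)\varphi(w)$. A set $\mathcal{R}$ of regular languages over $\Sigma$ is a rational set of regular languages, written $\mathcal{R}=(K,\varphi)$, if there are an alphabet $\Delta$, a regular $K\subseteq\Delta^+$ and a regular language substitution $\varphi$ with $\mathcal{R}=\{\varphi(w)\mid w\in K\}$. *)

theory Defs
  imports Main
begin

definition alphabet :: "'a set \<Rightarrow> bool" where
  "alphabet A \<longleftrightarrow> finite A \<and> A \<noteq> {}"

definition conc :: "'a list set \<Rightarrow> 'a list set \<Rightarrow> 'a list set" where
  "conc A B = {u @ v | u v. u \<in> A \<and> v \<in> B}"

inductive_set star :: "'a list set \<Rightarrow> 'a list set" for A where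
  star_Nil: "[] \<in> star A"
| star_app: "u \<in> A \<Longrightarrow> v \<in> star A \<Longrightarrow> u @ v \<in> star A"

inductive regular :: "'a set \<Rightarrow> 'a list set \<Rightarrow> bool" for S where
  reg_empty: "regular S {}"
| reg_eps: "regular S {[]}"
| reg_letter: "a \<in> S \<Longrightarrow> regular S {[a]}"
| reg_union: "regular S A \<Longrightarrow> regular S B \<Longrightarrow> regular S (A \<union> B)"
| reg_conc: "regular S A \<Longrightarrow> regular S B \<Longrightarrow> regular S (conc A B)"
| reg_star: "regular S A \<Longrightarrow> regular S (star A)"

definition plus_words :: "'a set \<Rightarrow> 'a list set" where
  "plus_words D = lists D - {[]}"

definition reg_subst :: "'d set \<Rightarrow> 'a set \<Rightarrow> ('d \<Rightarrow> 'a list set) \<Rightarrow> bool" where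
  "reg_subst D S phi \<longleftrightarrow> (\<forall>d\<in>D. regular S (phi d))"

fun subst_word :: "('d \<Rightarrow> 'a list set) \<Rightarrow> 'd list \<Rightarrow> 'a list set" where
  "subst_word phi [] = {[]}"
| "subst_word phi (d # w) = conc (phi d) (subst_word phi w)"

definition rat_of :: "'d list set \<Rightarrow> ('d \<Rightarrow> 'a list set) \<Rightarrow> 'a list set set" where
  "rat_of K phi = subst_word phi ` K"

text \<open>Rational set of regular languages over S.  The auxiliary alphabet D ranges
  over finite nonempty sets of natural numbers (every finite alphabet can be
  renamed into nat).\<close>
definition rational_set :: "'a set \<Rightarrow> 'a list set set \<Rightarrow> bool" where
  "rational_set S R \<longleftrightarrow>
     (\<exists>(D::nat set) K phi. alphabet D \<and> K \<subseteq> plus_words D \<and> regular D K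
        \<and> reg_subst D S phi \<and> R = rat_of K phi)"

definition dminus :: "'a list set set \<Rightarrow> 'a list set \<Rightarrow> 'a list set set" where
  "dminus R L = (\<lambda>L'. L' - L) ` R"

end

theory Submission imports Defs begin

text \<open>(1) With \<open>\<phi>(a) = {0, 1}\<close> and \<open>K = a\<^sup>+\<close>, removing from each \<open>{0, 1}\<^sup>n\<close> the words that contain
  both letters leaves the infinitely many languages \<open>{0\<^sup>n, 1\<^sup>n}\<close>. Such a language cannot be a
  product of two languages other than \<open>{[]}\<close>, so in any presentation \<open>(K', \<psi>)\<close> it must equal some
  \<open>\<psi>(d)\<close>, and there are only finitely many letters d.
  (2) A finite set of regular languages is rational, using one letter per language, and
  regular languages are closed under difference: a language is regular iff it has finitely many
  left quotients (Brzozowski, McNaughton--Yamada).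
  (3) If no \<open>\<phi>(d)\<close> is empty, then no \<open>\<phi>(w)\<close> is empty, but \<open>{{0}} \<ominus> {0} = {\<emptyset>}\<close>.\<close>

lemma star_append: "u \<in> star A \<Longrightarrow> v \<in> star A \<Longrightarrow> u @ v \<in> star A"
  by (induction rule: star.induct) (auto intro: star.intros)

lemma conc_singleton_Nil [simp]: "conc A {[]} = A"
  by (simp add: conc_def)

lemma conc_singleton_Nil_left [simp]: "conc {[]} A = A"
  by (simp add: conc_def)

lemma regular_UN:
  "finite I \<Longrightarrow> (\<And>i. i \<in> I \<Longrightarrow> regular S (F i)) \<Longrightarrow> regular S (\<Union>i\<in>I. F i)"
  by (induction rule: finite_induct) (auto intro: regular.intros)

lemma regular_subset_lists: "regular S L \<Longrightarrow> L \<subseteq> lists S"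
proof (induction rule: regular.induct)
  case (reg_star A)
  show ?case
  proof
    fix w assume "w \<in> star A"
    then show "w \<in> lists S" by (induction rule: star.induct) (use reg_star in auto)
  qed
next
  case (reg_conc A B)
  then show ?case by (force simp: conc_def)
qed auto

definition deriv :: "'a list \<Rightarrow> 'a list set \<Rightarrow> 'a list set" where
  "deriv u L = {v. u @ v \<in> L}"

definition derivs :: "'a list set \<Rightarrow> 'a list set set" where
  "derivs L = range (\<lambda>u. deriv u L)"

lemma deriv_Nil [simp]: "deriv [] L = L"
  by (simp add: deriv_def)

lemma deriv_append: "deriv (u @ v) L = deriv v (deriv u L)"
  by (simp add: deriv_def)

lemma deriv_in_derivs [simp]: "deriv u L \<in> derivs L"
  by (simp add: derivs_def)

lemma deriv_union: "deriv u (A \<union> B) = deriv u A \<union> deriv u B"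
  by (auto simp: deriv_def)

lemma deriv_Diff: "deriv u (A - B) = deriv u A - deriv u B"
  by (auto simp: deriv_def)

lemma deriv_conc:
  "deriv u (conc A B) = conc (deriv u A) B \<union> \<Union> {deriv v B | v. \<exists>w. u = w @ v \<and> w \<in> A}"
proof (intro equalityI subsetI)
  fix z assume "z \<in> deriv u (conc A B)"
  then obtain x y where xy: "u @ z = x @ y" "x \<in> A" "y \<in> B"
    by (auto simp: deriv_def conc_def)
  from xy(1) obtain us where "u = x @ us \<and> us @ z = y \<or> u @ us = x \<and> z = us @ y"
    by (auto simp: append_eq_append_conv2)
  then show "z \<in> conc (deriv u A) B \<union> \<Union> {deriv v B | v. \<exists>w. u = w @ v \<and> w \<in> A}"
  proof
    assume "u = x @ us \<and> us @ z = y"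
    with xy have "z \<in> deriv us B" "\<exists>w. u = w @ us \<and> w \<in> A" by (auto simp: deriv_def)
    then show ?thesis by blast
  next
    assume "u @ us = x \<and> z = us @ y"
    with xy have "us \<in> deriv u A" "z = us @ y" by (auto simp: deriv_def)
    with xy(3) show ?thesis unfolding conc_def by blast
  qed
next
  fix z assume "z \<in> conc (deriv u A) B \<union> \<Union> {deriv v B | v. \<exists>w. u = w @ v \<and> w \<in> A}"
  then show "z \<in> deriv u (conc A B)"
  proof
    assume "z \<in> conc (deriv u A) B"
    then obtain s t where "z = s @ t" "u @ s \<in> A" "t \<in> B" by (auto simp: conc_def deriv_def)
    then have "u @ z = (u @ s) @ t" by simp
    with \<open>u @ s \<in> A\<close> \<open>t \<in> B\<close> show ?thesis unfolding deriv_def conc_def by blast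
  next
    assume "z \<in> \<Union> {deriv v B | v. \<exists>w. u = w @ v \<and> w \<in> A}"
    then obtain v w where "v @ z \<in> B" "u = w @ v" "w \<in> A" by (auto simp: deriv_def)
    then have "u @ z = w @ (v @ z)" by simp
    with \<open>v @ z \<in> B\<close> \<open>w \<in> A\<close> show ?thesis unfolding deriv_def conc_def by blast
  qed
qed

lemma star_split_prefix:
  "x \<in> star A \<Longrightarrow> x = u @ z \<Longrightarrow> u \<noteq> [] \<Longrightarrow>
   \<exists>w v. u = w @ v \<and> w \<in> star A \<and> v \<noteq> [] \<and> z \<in> conc (deriv v A) (star A)"
proof (induction arbitrary: u z rule: star.induct)
  case star_Nil
  then show ?case by simp
next
  case (star_app x y)
  show ?case
  proof (cases "length u \<le> length x")
    case True
    then obtain t where "x = u @ t" "z = t @ y"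
      using star_app.prems by (metis append_eq_append_conv_if append_take_drop_id)
    then show ?thesis
      using star_app star.star_Nil[of A]
      by (intro exI[of _ "[]"] exI[of _ u]) (auto simp: conc_def deriv_def)
  next
    case False
    define u' where "u' = drop (length x) u"
    have u': "u = x @ u'" "y = u' @ z" "u' \<noteq> []"
      using star_app.prems False unfolding u'_def
      by (auto simp: append_eq_append_conv_if) (metis append_take_drop_id)
    from star_app.IH[OF u'(2,3)] obtain w v where
      "u' = w @ v" "w \<in> star A" "v \<noteq> []" "z \<in> conc (deriv v A) (star A)"
      by blast
    with u' star_app.hyps show ?thesis
      by (intro exI[of _ "x @ w"] exI[of _ v]) (auto intro: star.star_app)
  qed
qed

lemma deriv_star:
  assumes "u \<noteq> []"
  shows "deriv u (star A) =
    \<Union> {conc (deriv v A) (star A) | v. \<exists>w. u = w @ v \<and> w \<in> star A \<and> v \<noteq> []}"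
proof (intro equalityI subsetI)
  fix z assume "z \<in> deriv u (star A)"
  then have "u @ z \<in> star A" by (simp add: deriv_def)
  from star_split_prefix[OF this refl assms]
  show "z \<in> \<Union> {conc (deriv v A) (star A) | v. \<exists>w. u = w @ v \<and> w \<in> star A \<and> v \<noteq> []}"
    by blast
next
  fix z assume "z \<in> \<Union> {conc (deriv v A) (star A) | v. \<exists>w. u = w @ v \<and> w \<in> star A \<and> v \<noteq> []}"
  then obtain v w z1 z2 where
    "u = w @ v" "w \<in> star A" "v @ z1 \<in> A" "z2 \<in> star A" "z = z1 @ z2"
    by (auto simp: conc_def deriv_def)
  then have "w @ ((v @ z1) @ z2) \<in> star A" by (intro star_append star.star_app)
  with \<open>u = w @ v\<close> \<open>z = z1 @ z2\<close> show "z \<in> deriv u (star A)" by (simp add: deriv_def)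
qed

section \<open>Regular languages have finitely many left quotients\<close>

lemma finite_derivs_pointwise:
  assumes "\<And>u. deriv u C = f (deriv u A) (deriv u B)"
    and "finite (derivs A)" and "finite (derivs B)"
  shows "finite (derivs C)"
proof (rule finite_subset)
  show "derivs C \<subseteq> case_prod f ` (derivs A \<times> derivs B)"
    using assms(1) by (auto simp: derivs_def)
qed (use assms(2,3) in simp)

lemma finite_derivs_conc:
  assumes "finite (derivs A)" and "finite (derivs B)"
  shows "finite (derivs (conc A B))"
proof (rule finite_subset)
  show "derivs (conc A B) \<subseteq> (\<lambda>(X, T). conc X B \<union> \<Union> T) ` (derivs A \<times> Pow (derivs B))"
  proof
    fix Z assume "Z \<in> derivs (conc A B)"
    then obtain u where "Z = deriv u (conc A B)" by (auto simp: derivs_def)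
    then show "Z \<in> (\<lambda>(X, T). conc X B \<union> \<Union> T) ` (derivs A \<times> Pow (derivs B))"
      unfolding deriv_conc
      by (intro image_eqI[of _ _ "(deriv u A, {deriv v B | v. \<exists>w. u = w @ v \<and> w \<in> A})"]) auto
  qed
qed (use assms in simp)

lemma finite_derivs_star:
  assumes "finite (derivs A)"
  shows "finite (derivs (star A))"
proof (rule finite_subset)
  show "derivs (star A) \<subseteq>
    insert (star A) ((\<lambda>T. \<Union> ((\<lambda>X. conc X (star A)) ` T)) ` Pow (derivs A))"
  proof
    fix Z assume "Z \<in> derivs (star A)"
    then obtain u where Z: "Z = deriv u (star A)" by (auto simp: derivs_def)
    show "Z \<in> insert (star A) ((\<lambda>T. \<Union> ((\<lambda>X. conc X (star A)) ` T)) ` Pow (derivs A))"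
    proof (cases "u = []")
      case False
      let ?T = "{deriv v A | v. \<exists>w. u = w @ v \<and> w \<in> star A \<and> v \<noteq> []}"
      have "Z = \<Union> ((\<lambda>X. conc X (star A)) ` ?T)"
        unfolding Z deriv_star[OF False] by blast
      moreover have "?T \<in> Pow (derivs A)" by auto
      ultimately show ?thesis by blast
    qed (simp add: Z)
  qed
qed (use assms in simp)

lemma regular_finite_derivs: "regular S L \<Longrightarrow> finite (derivs L)"
proof (induction rule: regular.induct)
  case reg_empty
  have "derivs ({} :: 'a list set) = {{}}" by (auto simp: derivs_def deriv_def)
  then show ?case by simp
next
  case reg_eps
  have "derivs {[] :: 'a list} \<subseteq> {{[]}, {}}" by (auto simp: derivs_def deriv_def)
  then show ?case by (rule finite_subset) simp
next
  case (reg_letter a)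
  have "derivs {[a]} \<subseteq> {{[a]}, {[]}, {}}"
  proof
    fix Z assume "Z \<in> derivs {[a]}"
    then obtain u where "Z = deriv u {[a]}" by (auto simp: derivs_def)
    then show "Z \<in> {{[a]}, {[]}, {}}" by (cases u) (auto simp: deriv_def)
  qed
  then show ?case by (rule finite_subset) simp
next
  case (reg_union A B)
  then show ?case
    by (intro finite_derivs_pointwise[of "A \<union> B" "(\<union>)" A B]) (simp_all add: deriv_union)
qed (simp_all add: finite_derivs_conc finite_derivs_star)

section \<open>Languages with finitely many left quotients are regular\<close>

text \<open>Runs of the automaton whose states are the left quotients, with intermediate states
  restricted to X as in the McNaughton--Yamada construction.\<close>
definition paths :: "'a set \<Rightarrow> 'a list set set \<Rightarrow> 'a list set \<Rightarrow> 'a list set \<Rightarrow> 'a list set" where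
  "paths S X p q = {w \<in> lists S. deriv w p = q \<and>
     (\<forall>i. 0 < i \<and> i < length w \<longrightarrow> deriv (take i w) p \<in> X)}"

lemma paths_mono: "X \<subseteq> Y \<Longrightarrow> paths S X p q \<subseteq> paths S Y p q"
  by (auto simp: paths_def)

lemma Nil_in_paths: "[] \<in> paths S X p p"
  by (simp add: paths_def)

lemma append_in_paths:
  assumes u: "u \<in> paths S X p r" and v: "v \<in> paths S X r q" and r: "r \<in> X"
  shows "u @ v \<in> paths S X p q"
proof -
  have du: "deriv u p = r" using u by (simp add: paths_def)
  have "deriv (take i (u @ v)) p \<in> X" if i: "0 < i" "i < length (u @ v)" for i
  proof -
    consider "i < length u" | "i = length u" | "length u < i" by linarith
    then show ?thesis
    proof cases
      case 3
      then have "take i (u @ v) = u @ take (i - length u) v" "0 < i - length u"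
        "i - length u < length v" using i by auto
      then show ?thesis using v du by (simp add: paths_def deriv_append)
    qed (use u i du r in \<open>auto simp: paths_def\<close>)
  qed
  with u v du show ?thesis by (simp add: paths_def deriv_append)
qed

lemma star_paths_subset: "r \<in> X \<Longrightarrow> star (paths S X r r) \<subseteq> paths S X r r"
proof
  fix w assume "w \<in> star (paths S X r r)" and "r \<in> X"
  then show "w \<in> paths S X r r"
    by (induction rule: star.induct) (auto intro: Nil_in_paths append_in_paths)
qed

lemma paths_first_visit:
  assumes w: "w \<in> paths S (insert r X) p q" and nw: "w \<notin> paths S X p q"
  obtains i where "0 < i" "i < length w" "take i w \<in> paths S X p r"
    "drop i w \<in> paths S (insert r X) r q"
proof -
  have wl: "w \<in> lists S" and dw: "deriv w p = q"
    and wi: "\<And>i. 0 < i \<Longrightarrow> i < length w \<Longrightarrow> deriv (take i w) p \<in> insert r X"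
    using w by (auto simp: paths_def)
  let ?P = "\<lambda>i. 0 < i \<and> i < length w \<and> deriv (take i w) p \<notin> X"
  have "\<exists>i. ?P i" using nw wl dw by (auto simp: paths_def)
  then obtain i where Pi: "?P i" and min: "\<And>j. j < i \<Longrightarrow> \<not> ?P j"
    unfolding exists_least_iff[of ?P] by blast
  have dr: "deriv (take i w) p = r" using Pi wi[of i] by simp
  have "take i w \<in> paths S X p r"
    unfolding paths_def
  proof (intro CollectI conjI allI impI)
    show "take i w \<in> lists S" using wl set_take_subset[of i w] by auto
    show "deriv (take i w) p = r" by (rule dr)
    fix j assume "0 < j \<and> j < length (take i w)"
    with min[of j] show "deriv (take j (take i w)) p \<in> X" by (auto simp: min_def split: if_splits)
  qed
  moreover have "drop i w \<in> paths S (insert r X) r q"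
    unfolding paths_def
  proof (intro CollectI conjI allI impI)
    show "drop i w \<in> lists S" using wl set_drop_subset[of i w] by auto
    show "deriv (drop i w) r = q" using dw dr by (metis append_take_drop_id deriv_append)
    fix j assume "0 < j \<and> j < length (drop i w)"
    then have "0 < i + j" "i + j < length w" by auto
    moreover have "deriv (take j (drop i w)) r = deriv (take (i + j) w) p"
      using dr by (simp add: take_add deriv_append)
    ultimately show "deriv (take j (drop i w)) r \<in> insert r X" using wi[of "i + j"] by simp
  qed
  ultimately show ?thesis using Pi that by blast
qed

lemma paths_insert_loops:
  "w \<in> paths S (insert r X) r q \<Longrightarrow> w \<in> conc (star (paths S X r r)) (paths S X r q)"
proof (induction "length w" arbitrary: w rule: less_induct)
  case less
  show ?case
  proof (cases "w \<in> paths S X r q")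
    case True
    then show ?thesis unfolding conc_def using star.star_Nil by fastforce
  next
    case False
    from paths_first_visit[OF less.prems False] obtain i where
      i: "0 < i" "i < length w" "take i w \<in> paths S X r r"
        "drop i w \<in> paths S (insert r X) r q"
      by blast
    then have "drop i w \<in> conc (star (paths S X r r)) (paths S X r q)"
      using less.hyps[of "drop i w"] by simp
    then obtain s t where
      st: "drop i w = s @ t" "s \<in> star (paths S X r r)" "t \<in> paths S X r q"
      by (auto simp: conc_def)
    with i have "take i w @ s \<in> star (paths S X r r)" by (intro star.star_app)
    moreover have "w = (take i w @ s) @ t" using st by (metis append_assoc append_take_drop_id)
    ultimately show ?thesis using st unfolding conc_def by blast
  qed
qed

lemma paths_insert:
  assumes "r \<notin> X"
  shows "paths S (insert r X) p q =
    paths S X p q \<union> conc (paths S X p r) (conc (star (paths S X r r)) (paths S X r q))"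
proof (intro equalityI subsetI)
  fix w assume w: "w \<in> paths S (insert r X) p q"
  show "w \<in> paths S X p q \<union> conc (paths S X p r) (conc (star (paths S X r r)) (paths S X r q))"
  proof (cases "w \<in> paths S X p q")
    case False
    from paths_first_visit[OF w False] obtain i where
      "take i w \<in> paths S X p r" "drop i w \<in> paths S (insert r X) r q" by blast
    moreover note paths_insert_loops[OF this(2)]
    ultimately have "take i w @ drop i w \<in>
      conc (paths S X p r) (conc (star (paths S X r r)) (paths S X r q))"
      unfolding conc_def by blast
    then show ?thesis by simp
  qed simp
next
  have sub: "paths S X a b \<subseteq> paths S (insert r X) a b" for a b by (rule paths_mono) blast
  fix w assume "w \<in> paths S X p q \<union> conc (paths S X p r) (conc (star (paths S X r r)) (paths S X r q))"
  then consider "w \<in> paths S X p q"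
    | u s t where "w = u @ s @ t" "u \<in> paths S X p r" "s \<in> star (paths S X r r)"
        "t \<in> paths S X r q"
    by (auto simp: conc_def)
  then show "w \<in> paths S (insert r X) p q"
  proof cases
    case 2
    from \<open>s \<in> star (paths S X r r)\<close> have "s \<in> star (paths S (insert r X) r r)"
      by (induction rule: star.induct) (use sub in \<open>auto intro: star.intros\<close>)
    then have "s \<in> paths S (insert r X) r r" using star_paths_subset by blast
    with 2 sub show ?thesis by (blast intro: append_in_paths)
  qed (use sub in blast)
qed

lemma paths_empty:
  "paths S {} p q = (if p = q then {[]} else {}) \<union> (\<Union>a\<in>{a \<in> S. deriv [a] p = q}. {[a]})"
proof (intro equalityI subsetI)
  fix w assume w: "w \<in> paths S {} p q"
  then have "\<not> 1 < length w" unfolding paths_def by (auto dest: spec[of _ 1])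
  then consider "w = []" | a where "w = [a]" by (cases w) auto
  then show "w \<in> (if p = q then {[]} else {}) \<union> (\<Union>a\<in>{a \<in> S. deriv [a] p = q}. {[a]})"
    using w by cases (simp_all add: paths_def)
qed (auto simp: paths_def split: if_splits)

lemma regular_paths:
  assumes "finite S" and "finite X"
  shows "regular S (paths S X p q)"
  using assms(2)
proof (induction arbitrary: p q rule: finite_induct)
  case empty
  have "regular S (if p = q then {[]} else {})" by (simp add: regular.intros)
  moreover have "regular S (\<Union>a\<in>{a \<in> S. deriv [a] p = q}. {[a]})"
    using assms(1) by (intro regular_UN) (auto intro: regular.intros)
  ultimately show ?case unfolding paths_empty by (rule regular.reg_union)
next
  case (insert r X)
  then show ?case unfolding paths_insert[OF insert(2)] by (intro regular.intros insert.IH)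
qed

lemma regular_if_finite_derivs:
  assumes "finite S" and "L \<subseteq> lists S" and "finite (derivs L)"
  shows "regular S L"
proof -
  have "L = (\<Union>q\<in>{q \<in> derivs L. [] \<in> q}. paths S (derivs L) L q)"
  proof (intro equalityI subsetI)
    fix w assume "w \<in> L"
    then have "w \<in> paths S (derivs L) L (deriv w L)" "[] \<in> deriv w L"
      using assms(2) by (auto simp: paths_def, simp add: deriv_def)
    then show "w \<in> (\<Union>q\<in>{q \<in> derivs L. [] \<in> q}. paths S (derivs L) L q)"
      using deriv_in_derivs by blast
  qed (auto simp: paths_def deriv_def)
  also have "regular S \<dots>" using assms by (intro regular_UN regular_paths) auto
  finally show ?thesis .
qed

lemma regular_Diff:
  assumes "finite S" and "regular S A" and "regular S B"
  shows "regular S (A - B)"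
proof (rule regular_if_finite_derivs)
  show "A - B \<subseteq> lists S" using regular_subset_lists[OF assms(2)] by blast
  show "finite (derivs (A - B))"
    using assms(2,3) regular_finite_derivs
    by (intro finite_derivs_pointwise[of "A - B" "(-)" A B]) (simp_all add: deriv_Diff)
qed (rule assms(1))

lemma regular_subst_word: "reg_subst D S phi \<Longrightarrow> w \<in> lists D \<Longrightarrow> regular S (subst_word phi w)"
  by (induction w) (auto simp: reg_subst_def intro: regular.intros)

lemma regular_if_in_rational_set: "rational_set S \<R> \<Longrightarrow> L \<in> \<R> \<Longrightarrow> regular S L"
  by (auto simp: rational_set_def rat_of_def plus_words_def intro: regular_subst_word)

text \<open>The letter n is unused by K; it keeps the auxiliary alphabet nonempty when the family is
  empty.\<close>
lemma rational_set_if_finite: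
  assumes "finite \<F>" and "\<And>L. L \<in> \<F> \<Longrightarrow> regular S L"
  shows "rational_set S \<F>"
proof -
  define n where "n = card \<F>"
  obtain h where h: "bij_betw h {0..<n} \<F>"
    using ex_bij_betw_nat_finite[OF assms(1)] unfolding n_def by blast
  define D where "D = {0..n}"
  define K where "K = (\<lambda>i. [i]) ` {0..<n}"
  define phi where "phi i = (if i < n then h i else {})" for i
  have "alphabet D" by (simp add: D_def alphabet_def)
  moreover have "K \<subseteq> plus_words D" by (auto simp: K_def D_def plus_words_def)
  moreover have "regular D K"
  proof -
    have "K = (\<Union>i\<in>{0..<n}. {[i]})" unfolding K_def by blast
    also have "regular D \<dots>" by (intro regular_UN) (auto simp: D_def intro: regular.intros)
    finally show ?thesis .
  qed
  moreover have "reg_subst D S phi"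
    using h assms(2) by (auto simp: reg_subst_def phi_def regular.intros dest: bij_betwE)
  moreover have "\<F> = rat_of K phi"
    using h by (auto simp: rat_of_def K_def phi_def image_image bij_betw_def)
  ultimately show ?thesis unfolding rational_set_def by blast
qed

lemma rational_set_dminus_finite:
  assumes "alphabet S" and "rational_set S \<R>" and "finite \<R>" and "regular S R"
  shows "rational_set S (dminus \<R> R) \<and> finite (dminus \<R> R)"
proof
  show "finite (dminus \<R> R)" using assms(3) by (simp add: dminus_def)
  moreover have "regular S L" if "L \<in> dminus \<R> R" for L
  proof -
    from that obtain L' where "L' \<in> \<R>" "L = L' - R" by (auto simp: dminus_def)
    with assms show ?thesis
      by (auto simp: alphabet_def intro: regular_Diff regular_if_in_rational_set)
  qed
  ultimately show "rational_set S (dminus \<R> R)" by (rule rational_set_if_finite)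
qed

section \<open>Two-word languages that do not factor\<close>

text \<open>Otherwise both words split at the same position into nonempty parts, and the cross product
  of the first part of x with the second part of y is x or y, forcing equal first or equal
  last letters.\<close>
lemma conc_eq_doubleton:
  assumes eq: "conc A B = {x, y}" and "length x = length y" and "x \<noteq> []"
    and hd: "hd x \<noteq> hd y" and last: "last x \<noteq> last y"
  shows "A = {x, y} \<or> B = {x, y}"
proof -
  have mem: "u @ v \<in> {x, y}" if "u \<in> A" "v \<in> B" for u v
    using eq that unfolding conc_def by blast
  have len: "length u + length v = length x" if "u \<in> A" "v \<in> B" for u v
    using mem[OF that] assms(2) by auto
  obtain u1 v1 where x: "x = u1 @ v1" "u1 \<in> A" "v1 \<in> B"
    using eq unfolding conc_def by blast
  obtain u2 v2 where y: "y = u2 @ v2" "u2 \<in> A" "v2 \<in> B"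
    using eq unfolding conc_def by blast
  consider "[] \<in> A" | "[] \<in> B" | "[] \<notin> A" "[] \<notin> B" by blast
  then show ?thesis
  proof cases
    case 1
    then have "A = {[]}" using len[OF _ x(3)] len[OF 1 x(3)] by fastforce
    then show ?thesis using eq by simp
  next
    case 2
    then have "B = {[]}" using len[OF x(2)] len[OF x(2) 2] by fastforce
    then show ?thesis using eq by simp
  next
    case 3
    then have ne: "u1 \<noteq> []" "u2 \<noteq> []" "v1 \<noteq> []" "v2 \<noteq> []" using x y by auto
    have "length u1 = length u2"
      using len[OF x(2) x(3)] len[OF x(2) y(3)] len[OF y(2) y(3)] by simp
    moreover have "u1 @ v2 = x \<or> u1 @ v2 = y" using mem[OF x(2) y(3)] by simp
    ultimately have "v1 = v2 \<or> u1 = u2" using x y by auto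
    with x y ne hd last show ?thesis by auto
  qed
qed

lemma subst_word_eq_doubleton:
  assumes "subst_word phi w = {x, y}" and "length x = length y" and "x \<noteq> []"
    and "hd x \<noteq> hd y" and "last x \<noteq> last y"
  shows "\<exists>d\<in>set w. phi d = {x, y}"
  using assms(1)
proof (induction w)
  case Nil
  then show ?case using assms(2,3) by (auto simp: doubleton_eq_iff)
next
  case (Cons d w)
  then show ?case using conc_eq_doubleton[OF _ assms(2-5), of "phi d"] by auto
qed

lemma rational_set_finite_doubletons:
  assumes "rational_set S \<R>"
  shows "finite {L \<in> \<R>. \<exists>x y. L = {x, y} \<and> length x = length y \<and> x \<noteq> []
                   \<and> hd x \<noteq> hd y \<and> last x \<noteq> last y}"
proof -
  obtain D :: "nat set" and K phi where "alphabet D" "K \<subseteq> plus_words D" "\<R> = rat_of K phi"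
    using assms unfolding rational_set_def by blast
  have "{x, y} \<in> phi ` D" if xy: "{x, y} \<in> \<R>" and shape: "length x = length y" "x \<noteq> []"
    "hd x \<noteq> hd y" "last x \<noteq> last y" for x y
  proof -
    from xy obtain w where w: "w \<in> K" "subst_word phi w = {x, y}"
      using \<open>\<R> = rat_of K phi\<close> by (auto simp: rat_of_def)
    then obtain d where "d \<in> set w" "phi d = {x, y}"
      using subst_word_eq_doubleton[OF w(2) shape] by blast
    moreover have "set w \<subseteq> D" using w(1) \<open>K \<subseteq> plus_words D\<close> by (auto simp: plus_words_def)
    ultimately show ?thesis by (metis image_eqI subsetD)
  qed
  then have "{L \<in> \<R>. \<exists>x y. L = {x, y} \<and> length x = length y \<and> x \<noteq> []
                   \<and> hd x \<noteq> hd y \<and> last x \<noteq> last y} \<subseteq> phi ` D"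
    by blast
  moreover have "finite (phi ` D)" using \<open>alphabet D\<close> by (simp add: alphabet_def)
  ultimately show ?thesis by (rule finite_subset)
qed

lemma subst_word_letters:
  "subst_word (\<lambda>_. (\<lambda>a. [a]) ` S) w = {v \<in> lists S. length v = length w}"
proof (induction w)
  case (Cons d w)
  have "conc ((\<lambda>a. [a]) ` S) {v \<in> lists S. length v = length w} =
    {v \<in> lists S. length v = Suc (length w)}"
  proof (intro equalityI subsetI)
    fix v assume "v \<in> {v \<in> lists S. length v = Suc (length w)}"
    then obtain a v' where "v = [a] @ v'" "a \<in> S" "v' \<in> lists S" "length v' = length w"
      by (cases v) auto
    then show "v \<in> conc ((\<lambda>a. [a]) ` S) {v \<in> lists S. length v = length w}"
      unfolding conc_def by blast
  qed (auto simp: conc_def)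
  with Cons show ?case by simp
qed auto

lemma regular_plus_words: "finite D \<Longrightarrow> regular D (plus_words D)"
proof (rule regular_if_finite_derivs)
  have "deriv u (plus_words D) =
    (if u \<in> lists D then if u = [] then plus_words D else lists D else {})" for u
    by (auto simp: deriv_def plus_words_def)
  then have "derivs (plus_words D) \<subseteq> {plus_words D, lists D, {}}" by (auto simp: derivs_def)
  then show "finite (derivs (plus_words D))" by (rule finite_subset) simp
qed (auto simp: plus_words_def)

definition both_letters :: "nat list set" where
  "both_letters = {w \<in> lists {0, 1}. 0 \<in> set w \<and> 1 \<in> set w}"

lemma regular_both_letters: "regular {0, 1} both_letters"
proof (rule regular_if_finite_derivs)
  define F :: "bool \<times> bool \<Rightarrow> nat list set"
    where "F = (\<lambda>(p, q). {v \<in> lists {0, 1}. (p \<or> 0 \<in> set v) \<and> (q \<or> 1 \<in> set v)})"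
  have "deriv u both_letters = (if u \<in> lists {0, 1} then F (0 \<in> set u, 1 \<in> set u) else {})" for u
    by (auto simp: deriv_def both_letters_def F_def)
  then have "derivs both_letters \<subseteq> insert {} (range F)" by (auto simp: derivs_def)
  then show "finite (derivs both_letters)" by (rule finite_subset) simp
qed (auto simp: both_letters_def)

lemma words_Diff_both_letters:
  assumes "0 < n"
  shows "{v \<in> lists {0, 1}. length v = n} - both_letters = {replicate n 0, replicate n 1}"
proof (intro equalityI subsetI)
  fix v assume v: "v \<in> {v \<in> lists {0, 1}. length v = n} - both_letters"
  then have "set v \<subseteq> {0, 1}" "v \<notin> both_letters" by (auto simp: in_lists_conv_set)
  then have "set v \<subseteq> {0, 1}" "\<not> (0 \<in> set v \<and> 1 \<in> set v)"
    unfolding both_letters_def in_lists_conv_set by blast+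
  then have "(\<forall>a\<in>set v. a = 0) \<or> (\<forall>a\<in>set v. a = 1)" by blast
  then have "v = replicate (length v) 0 \<or> v = replicate (length v) 1"
    by (metis replicate_length_same)
  with v show "v \<in> {replicate n 0, replicate n 1}" by auto
qed (use assms in \<open>auto simp: both_letters_def\<close>)

lemma dminus_not_rational:
  "\<exists>(S::nat set). alphabet S \<and>
     (\<exists>\<R> R. rational_set S \<R> \<and> regular S R \<and> \<not> rational_set S (dminus \<R> R))"
proof (intro exI conjI)
  let ?phi = "\<lambda>_::nat. (\<lambda>a. [a]) ` {0::nat, 1}"
  let ?\<R> = "rat_of (plus_words {0}) ?phi"
  show "alphabet {0::nat, 1}" by (simp add: alphabet_def)
  have "regular {0, 1} ({[0]} \<union> {[1::nat]})" by (intro regular.intros) auto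
  then show "rational_set {0, 1} ?\<R>"
    unfolding rational_set_def
    by (intro exI[of _ "{0}"] exI[of _ "plus_words {0}"] exI[of _ ?phi])
      (simp add: alphabet_def reg_subst_def regular_plus_words insert_commute)
  show "regular {0, 1} both_letters" by (rule regular_both_letters)
  show "\<not> rational_set {0, 1} (dminus ?\<R> both_letters)"
  proof
    assume "rational_set {0, 1} (dminus ?\<R> both_letters)"
    then have fin: "finite {L \<in> dminus ?\<R> both_letters. \<exists>x y. L = {x, y} \<and>
      length x = length y \<and> x \<noteq> [] \<and> hd x \<noteq> hd y \<and> last x \<noteq> last y}"
      by (rule rational_set_finite_doubletons)
    have mem: "{replicate (Suc n) 0, replicate (Suc n) 1} \<in> dminus ?\<R> both_letters" for n
    proof -
      have "replicate (Suc n) 0 \<in> plus_words {0}" by (auto simp: plus_words_def in_lists_conv_set)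
      then have "subst_word ?phi (replicate (Suc n) 0) - both_letters \<in> dminus ?\<R> both_letters"
        unfolding dminus_def rat_of_def by blast
      then show ?thesis
        by (simp only: subst_word_letters words_Diff_both_letters length_replicate zero_less_Suc)
    qed
    have shape: "\<exists>x y. {replicate (Suc n) (0::nat), replicate (Suc n) 1} = {x, y} \<and>
         length x = length y \<and> x \<noteq> [] \<and> hd x \<noteq> hd y \<and> last x \<noteq> last y" for n
      by (intro exI[of _ "replicate (Suc n) 0"] exI[of _ "replicate (Suc n) 1"])
        (simp del: replicate_Suc add: hd_replicate last_replicate)
    have "range (\<lambda>n. {replicate (Suc n) 0, replicate (Suc n) 1}) \<subseteq>
      {L \<in> dminus ?\<R> both_letters. \<exists>x y. L = {x, y} \<and>
         length x = length y \<and> x \<noteq> [] \<and> hd x \<noteq> hd y \<and> last x \<noteq> last y}"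
      using mem shape by blast
    then have "finite (range (\<lambda>n. {replicate (Suc n) (0::nat), replicate (Suc n) 1}))"
      using fin by (rule finite_subset)
    moreover have "inj (\<lambda>n. {replicate (Suc n) (0::nat), replicate (Suc n) 1})"
      by (rule injI) (metis doubleton_eq_iff length_replicate nat.inject)
    ultimately show False using finite_imageD infinite_UNIV_nat by blast
  qed
qed

lemma subst_word_nonempty: "(\<And>d. d \<in> set w \<Longrightarrow> phi d \<noteq> {}) \<Longrightarrow> subst_word phi w \<noteq> {}"
  by (induction w) (auto simp: conc_def)

lemma dminus_needs_other_substitution:
  "\<exists>(S::nat set). alphabet S \<and>
     (\<exists>(D::nat set) (phi :: nat \<Rightarrow> nat list set) K R.
        alphabet D \<and> reg_subst D S phi \<and> K \<subseteq> plus_words D \<and> regular D K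
        \<and> finite (rat_of K phi) \<and> regular S R
        \<and> \<not> (\<exists>K'. K' \<subseteq> plus_words D \<and> regular D K' \<and> dminus (rat_of K phi) R = rat_of K' phi))"
proof (intro exI conjI)
  let ?phi = "\<lambda>_::nat. {[0::nat]}"
  show "alphabet {0::nat}" "alphabet {0::nat}" by (simp_all add: alphabet_def)
  show "reg_subst {0} {0} ?phi" "regular {0} {[0::nat]}" "regular {0::nat} {[0]}"
    by (simp_all add: reg_subst_def regular.intros)
  show "{[0::nat]} \<subseteq> plus_words {0}" by (simp add: plus_words_def)
  show "finite (rat_of {[0::nat]} ?phi)" by (simp add: rat_of_def)
  have "dminus (rat_of {[0]} ?phi) {[0]} = {{}}" by (simp add: dminus_def rat_of_def)
  moreover have "{} \<notin> rat_of K' ?phi" for K'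
    using subst_word_nonempty[of _ ?phi] by (force simp: rat_of_def)
  ultimately show "\<not> (\<exists>K'. K' \<subseteq> plus_words {0} \<and> regular {0} K'
      \<and> dminus (rat_of {[0]} ?phi) {[0]} = rat_of K' ?phi)"
    by (metis insertI1)
qed

theorem proposition10:
  shows "(\<exists>(S::nat set). alphabet S \<and>
            (\<exists>\<R> R. rational_set S \<R> \<and> regular S R \<and> \<not> rational_set S (dminus \<R> R)))
    \<and> (\<forall>(S::'a set) \<R> R. alphabet S \<longrightarrow> rational_set S \<R> \<longrightarrow> finite \<R> \<longrightarrow> regular S R \<longrightarrow>
            rational_set S (dminus \<R> R) \<and> finite (dminus \<R> R))
    \<and> (\<exists>(S::nat set). alphabet S \<and>
            (\<exists>(D::nat set) (phi :: nat \<Rightarrow> nat list set) K R.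
               alphabet D \<and> reg_subst D S phi \<and> K \<subseteq> plus_words D \<and> regular D K
               \<and> finite (rat_of K phi) \<and> regular S R
               \<and> \<not> (\<exists>K'. K' \<subseteq> plus_words D \<and> regular D K'
                       \<and> dminus (rat_of K phi) R = rat_of K' phi)))"
  using dminus_not_rational rational_set_dminus_finite dminus_needs_other_substitution
  by blast

end
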